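(* Let $\mathcal M=(S,L,\tau,\ell)$ be an LMC (possibly with infinitely many states). There is a policy $T$ such that for all $(s,t)\in S^2$ and all policies $T'$, \[ d(s,t)=\mathcal R^T_{\mathcal M}((s,t),S^2_1)\le\mathcal R^{T'}_{\mathcal M}((s,t),S^2_1). \] In particular $d=\min_{T}\mathcal R^T_{\mathcal M}(\cdot,S^2_1)$, the minimum being over all policies.
   Context: An LMC $\mathcal M=(S,L,\tau,\ell)$ has a nonempty countable state set $S$, finite label set $L$, finitely-branching transition function $\tau:S\to\mathrm{Distr}(S)$ and labelling $\ell$. The probabilistic bisimilarity distance $d$ is the least fixed point of $\Delta(e)(s,t)=1$ if $\ell(s)\ne\ell(t)$ and $\Delta(e)(s,t)=\min_{\omega\in\Omega(\tau(s),\tau(t))}\sum_{u,v}\omega(u,v)e(u,v)$ otherwise, where $\Omega(\mu,\nu)$ is the set of couplings (distributions on $S\times S$ with marginals $\mu,\nu$). Probabilistic bisimilarity $\sim$ is the largest equivalence $R$ on $S$ such that $(s,t)\in R$ implies $\ell(s)=\ell(t)$ and $\tau(s)(E)=\tau(t)(E)$ for every $R$-class $E$. Partition $S^2$ into $S^2_0=\{(s,t):s\sim t\}$, $S^2_1=\{(s,t):\ell(s)\ne\ell(t)\}$, $S^2_?=S^2\setminus(S^2_0\cup S^2_1)$. A policy is a map $T:S^2_?\to\mathrm{Distr}(S^2)$ with $T(s,t)\in\Omega(\tau(s),\tau(t))$. The Markov chain $\mathcal C^T_{\mathcal M}$ on $S^2$ has every pair in $S^2_0\cup S^2_1$ absorbing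 and from $(u,v)\in S^2_?$ moves to $(x,y)$ with probability $T(u,v)(x,y)$. $\mathcal R^T_{\mathcal M}((s,t),Z)$ is the probability that $\mathcal C^T_{\mathcal M}$ started in $(s,t)$ reaches $Z\subseteq S^2$. *)

theory Defs
  imports "HOL-Probability.Probability"
begin

definition lmc :: "'s set \<Rightarrow> 'l set \<Rightarrow> ('s \<Rightarrow> 's pmf) \<Rightarrow> ('s \<Rightarrow> 'l) \<Rightarrow> bool" where
  "lmc S L \<tau> lab \<longleftrightarrow> S \<noteq> {} \<and> countable S \<and> finite L \<and>
     (\<forall>s\<in>S. set_pmf (\<tau> s) \<subseteq> S \<and> finite (set_pmf (\<tau> s)) \<and> lab s \<in> L)"

definition couplings :: "'s pmf \<Rightarrow> 's pmf \<Rightarrow> ('s \<times> 's) pmf set" where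
  "couplings \<mu> \<nu> = {\<omega>. map_pmf fst \<omega> = \<mu> \<and> map_pmf snd \<omega> = \<nu>}"

text \<open>The operator Delta (the minimum over couplings is written as an infimum;
it is attained since the set of couplings of finitely supported distributions is a compact polytope).\<close>
definition Delta :: "('s \<Rightarrow> 's pmf) \<Rightarrow> ('s \<Rightarrow> 'l) \<Rightarrow> ('s \<times> 's \<Rightarrow> real) \<Rightarrow> 's \<times> 's \<Rightarrow> real" where
  "Delta \<tau> lab e = (\<lambda>(s,t). if lab s \<noteq> lab t then 1
      else Inf ((\<lambda>\<omega>. \<Sum>p\<in>set_pmf \<omega>. pmf \<omega> p * e p) ` couplings (\<tau> s) (\<tau> t)))"

definition dfun :: "'s set \<Rightarrow> ('s \<times> 's \<Rightarrow> real) \<Rightarrow> bool" where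
  "dfun S e \<longleftrightarrow> (\<forall>p. p \<notin> S \<times> S \<longrightarrow> e p = 0) \<and> (\<forall>p\<in>S \<times> S. 0 \<le> e p \<and> e p \<le> 1)"

definition is_fixpoint :: "'s set \<Rightarrow> ('s \<Rightarrow> 's pmf) \<Rightarrow> ('s \<Rightarrow> 'l) \<Rightarrow> ('s \<times> 's \<Rightarrow> real) \<Rightarrow> bool" where
  "is_fixpoint S \<tau> lab e \<longleftrightarrow> dfun S e \<and> (\<forall>p\<in>S \<times> S. Delta \<tau> lab e p = e p)"

definition bdist :: "'s set \<Rightarrow> ('s \<Rightarrow> 's pmf) \<Rightarrow> ('s \<Rightarrow> 'l) \<Rightarrow> 's \<times> 's \<Rightarrow> real" where
  "bdist S \<tau> lab = (THE e. is_fixpoint S \<tau> lab e \<and>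
      (\<forall>e'. is_fixpoint S \<tau> lab e' \<longrightarrow> (\<forall>p\<in>S \<times> S. e p \<le> e' p)))"

definition prob_bisim :: "'s set \<Rightarrow> ('s \<Rightarrow> 's pmf) \<Rightarrow> ('s \<Rightarrow> 'l) \<Rightarrow> ('s \<times> 's) set \<Rightarrow> bool" where
  "prob_bisim S \<tau> lab R \<longleftrightarrow> equiv S R \<and>
     (\<forall>(s,t)\<in>R. lab s = lab t \<and>
        (\<forall>E\<in>S // R. measure_pmf.prob (\<tau> s) E = measure_pmf.prob (\<tau> t) E))"

definition bisimilar :: "'s set \<Rightarrow> ('s \<Rightarrow> 's pmf) \<Rightarrow> ('s \<Rightarrow> 'l) \<Rightarrow> ('s \<times> 's) set" where
  "bisimilar S \<tau> lab = \<Union>{R. prob_bisim S \<tau> lab R}"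

definition S2_0 :: "'s set \<Rightarrow> ('s \<Rightarrow> 's pmf) \<Rightarrow> ('s \<Rightarrow> 'l) \<Rightarrow> ('s \<times> 's) set" where
  "S2_0 S \<tau> lab = bisimilar S \<tau> lab"

definition S2_1 :: "'s set \<Rightarrow> ('s \<Rightarrow> 'l) \<Rightarrow> ('s \<times> 's) set" where
  "S2_1 S lab = {(s,t) \<in> S \<times> S. lab s \<noteq> lab t}"

definition S2_q :: "'s set \<Rightarrow> ('s \<Rightarrow> 's pmf) \<Rightarrow> ('s \<Rightarrow> 'l) \<Rightarrow> ('s \<times> 's) set" where
  "S2_q S \<tau> lab = S \<times> S - (S2_0 S \<tau> lab \<union> S2_1 S lab)"

definition policy :: "'s set \<Rightarrow> ('s \<Rightarrow> 's pmf) \<Rightarrow> ('s \<Rightarrow> 'l) \<Rightarrow> ('s \<times> 's \<Rightarrow> ('s \<times> 's) pmf) \<Rightarrow> bool" where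
  "policy S \<tau> lab T \<longleftrightarrow> (\<forall>(s,t)\<in>S2_q S \<tau> lab. T (s,t) \<in> couplings (\<tau> s) (\<tau> t))"

definition chain_step :: "'s set \<Rightarrow> ('s \<Rightarrow> 's pmf) \<Rightarrow> ('s \<Rightarrow> 'l) \<Rightarrow> ('s \<times> 's \<Rightarrow> ('s \<times> 's) pmf)
    \<Rightarrow> 's \<times> 's \<Rightarrow> ('s \<times> 's) pmf" where
  "chain_step S \<tau> lab T p = (if p \<in> S2_q S \<tau> lab then T p else return_pmf p)"

fun reach_n :: "'s set \<Rightarrow> ('s \<Rightarrow> 's pmf) \<Rightarrow> ('s \<Rightarrow> 'l) \<Rightarrow> ('s \<times> 's \<Rightarrow> ('s \<times> 's) pmf)
    \<Rightarrow> ('s \<times> 's) set \<Rightarrow> nat \<Rightarrow> 's \<times> 's \<Rightarrow> real" where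
  "reach_n S \<tau> lab T Z 0 p = (if p \<in> Z then 1 else 0)"
| "reach_n S \<tau> lab T Z (Suc n) p = (if p \<in> Z then 1
      else measure_pmf.expectation (chain_step S \<tau> lab T p) (reach_n S \<tau> lab T Z n))"

definition reach_prob :: "'s set \<Rightarrow> ('s \<Rightarrow> 's pmf) \<Rightarrow> ('s \<Rightarrow> 'l) \<Rightarrow> ('s \<times> 's \<Rightarrow> ('s \<times> 's) pmf)
    \<Rightarrow> 's \<times> 's \<Rightarrow> ('s \<times> 's) set \<Rightarrow> real" where
  "reach_prob S \<tau> lab T p Z = (SUP n. reach_n S \<tau> lab T Z n p)"

end

theory Submission
  imports Defs
begin

(* The distance d is the least prefixed point of Delta, obtained as the pointwise infimum of all
   prefixed points (Knaster-Tarski).  For any policy T the reachability probability R^T of S2_1 is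
   itself a prefixed point: it is 1 on S2_1; on S2_? it satisfies the Bellman equation
   R^T(p) = sum_q T(p)(q) R^T(q), so the coupling T(p) witnesses Delta R^T <= R^T; and it vanishes
   on bisimilar pairs, for which a bisimulation provides a coupling supported on bisimilar pairs.
   Hence d <= R^T.  Conversely, pick for every pair in S2_? a coupling attaining the minimum in
   Delta d (it exists because the couplings of two finitely supported distributions form a compact
   polytope).  By induction the n-step reachability probabilities of this policy stay below the
   fixed point d, so its reachability probability equals d. *)

section \<open>Expected costs and optimal couplings\<close>

definition cost :: "('a \<Rightarrow> real) \<Rightarrow> 'a pmf \<Rightarrow> real" where
  "cost e \<omega> = (\<Sum>p\<in>set_pmf \<omega>. pmf \<omega> p * e p)"

lemma cost_mono:
  assumes "\<And>p. p \<in> set_pmf \<omega> \<Longrightarrow> e p \<le> e' p"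
  shows "cost e \<omega> \<le> cost e' \<omega>"
  unfolding cost_def using assms by (intro sum_mono mult_left_mono) auto

lemma cost_const:
  assumes "finite (set_pmf \<omega>)" "\<And>p. p \<in> set_pmf \<omega> \<Longrightarrow> e p = c"
  shows "cost e \<omega> = c"
proof -
  have "cost e \<omega> = (\<Sum>p\<in>set_pmf \<omega>. pmf \<omega> p) * c"
    unfolding cost_def using assms(2) by (simp add: sum_distrib_right)
  then show ?thesis
    using assms(1) by (simp add: sum_pmf_eq_1)
qed

lemma cost_bounds:
  assumes "finite (set_pmf \<omega>)" "\<And>p. p \<in> set_pmf \<omega> \<Longrightarrow> a \<le> e p \<and> e p \<le> b"
  shows "a \<le> cost e \<omega> \<and> cost e \<omega> \<le> b"
  using cost_mono[of \<omega> "\<lambda>_. a" e] cost_mono[of \<omega> e "\<lambda>_. b"]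
    cost_const[OF assms(1), of "\<lambda>_. a"] cost_const[OF assms(1), of "\<lambda>_. b"] assms(2)
  by auto

lemma expectation_eq_cost:
  assumes "finite (set_pmf \<omega>)"
  shows "measure_pmf.expectation \<omega> e = cost e \<omega>"
  unfolding cost_def by (subst integral_measure_pmf[OF assms]) auto

lemma tendsto_cost:
  assumes "\<And>p. (\<lambda>n. f n p) \<longlonglongrightarrow> g p"
  shows "(\<lambda>n. cost (f n) \<omega>) \<longlonglongrightarrow> cost g \<omega>"
  unfolding cost_def by (intro tendsto_sum tendsto_mult_left assms)

lemma set_pmf_coupling:
  assumes "\<omega> \<in> couplings \<mu> \<nu>"
  shows "set_pmf \<omega> \<subseteq> set_pmf \<mu> \<times> set_pmf \<nu>"
proof -
  have "fst ` set_pmf \<omega> = set_pmf \<mu>" "snd ` set_pmf \<omega> = set_pmf \<nu>"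
    using assms unfolding couplings_def by (metis (mono_tags) mem_Collect_eq set_map_pmf)+
  then show ?thesis by force
qed

lemma pair_pmf_coupling: "pair_pmf \<mu> \<nu> \<in> couplings \<mu> \<nu>"
  by (simp add: couplings_def map_fst_pair_pmf map_snd_pair_pmf)

lemma pmf_map_fst:
  assumes "set_pmf \<omega> \<subseteq> A \<times> B" "finite B"
  shows "pmf (map_pmf fst \<omega>) a = (\<Sum>b\<in>B. pmf \<omega> (a, b))"
proof -
  have "pmf (map_pmf fst \<omega>) a = measure \<omega> (fst -` {a} \<inter> set_pmf \<omega>)"
    by (simp add: pmf_map measure_Int_set_pmf)
  also have "fst -` {a} \<inter> set_pmf \<omega> = ({a} \<times> B) \<inter> set_pmf \<omega>"
    using assms(1) by auto
  also have "measure \<omega> \<dots> = sum (pmf \<omega>) ({a} \<times> B)"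
    using assms(2) by (simp add: measure_Int_set_pmf measure_measure_pmf_finite)
  also have "\<dots> = (\<Sum>b\<in>B. pmf \<omega> (a, b))"
    by (simp add: sum.cartesian_product')
  finally show ?thesis .
qed

lemma pmf_map_snd:
  assumes "set_pmf \<omega> \<subseteq> A \<times> B" "finite A"
  shows "pmf (map_pmf snd \<omega>) b = (\<Sum>a\<in>A. pmf \<omega> (a, b))"
proof -
  have "map_pmf snd \<omega> = map_pmf fst (map_pmf prod.swap \<omega>)"
    by (simp add: pmf.map_comp comp_def)
  moreover have "set_pmf (map_pmf prod.swap \<omega>) \<subseteq> B \<times> A"
    using assms(1) by auto
  moreover have "pmf (map_pmf prod.swap \<omega>) (b, a) = pmf \<omega> (a, b)" for a
    using pmf_map_inj'[of prod.swap \<omega> "(a, b)"] by simp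
  ultimately show ?thesis
    using pmf_map_fst[of "map_pmf prod.swap \<omega>" B A b] assms(2) by simp
qed

text \<open>The couplings of \<open>\<mu>\<close> and \<open>\<nu>\<close>, as points of the function space with the product topology.
  For finite supports this polytope is compact, so every cost functional attains its minimum.\<close>

definition coupling_weights :: "'a pmf \<Rightarrow> 'b pmf \<Rightarrow> ('a \<times> 'b \<Rightarrow> real) set" where
  "coupling_weights \<mu> \<nu> = {f.
     (\<forall>q. 0 \<le> f q) \<and> (\<forall>q. q \<notin> set_pmf \<mu> \<times> set_pmf \<nu> \<longrightarrow> f q = 0) \<and>
     (\<forall>a. (\<Sum>b\<in>set_pmf \<nu>. f (a, b)) = pmf \<mu> a) \<and> (\<forall>b. (\<Sum>a\<in>set_pmf \<mu>. f (a, b)) = pmf \<nu> b)}"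

lemma pmf_in_coupling_weights:
  assumes fin: "finite (set_pmf \<mu>)" "finite (set_pmf \<nu>)" and \<omega>: "\<omega> \<in> couplings \<mu> \<nu>"
  shows "pmf \<omega> \<in> coupling_weights \<mu> \<nu>"
proof -
  have supp: "set_pmf \<omega> \<subseteq> set_pmf \<mu> \<times> set_pmf \<nu>"
    using set_pmf_coupling[OF \<omega>] .
  have "map_pmf fst \<omega> = \<mu>" "map_pmf snd \<omega> = \<nu>"
    using \<omega> by (simp_all add: couplings_def)
  then have "(\<Sum>b\<in>set_pmf \<nu>. pmf \<omega> (a, b)) = pmf \<mu> a" "(\<Sum>a\<in>set_pmf \<mu>. pmf \<omega> (a, b)) = pmf \<nu> b"
    for a b using pmf_map_fst[OF supp fin(2)] pmf_map_snd[OF supp fin(1)] by simp_all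
  moreover have "pmf \<omega> q = 0" if "q \<notin> set_pmf \<mu> \<times> set_pmf \<nu>" for q
    using supp that by (meson set_pmf_iff subsetD)
  ultimately show ?thesis
    by (simp add: coupling_weights_def)
qed

lemma coupling_weights_imp_coupling:
  assumes fin: "finite (set_pmf \<mu>)" "finite (set_pmf \<nu>)" and f: "f \<in> coupling_weights \<mu> \<nu>"
  obtains \<omega> where "\<omega> \<in> couplings \<mu> \<nu>" "pmf \<omega> = f"
proof
  let ?A = "set_pmf \<mu>" and ?B = "set_pmf \<nu>"
  have nonneg: "\<And>q. 0 \<le> f q" and outside: "\<And>q. q \<notin> ?A \<times> ?B \<Longrightarrow> f q = 0"
    using f by (auto simp: coupling_weights_def)
  have "(\<Sum>q\<in>?A \<times> ?B. f q) = (\<Sum>a\<in>?A. \<Sum>b\<in>?B. f (a, b))"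
    by (simp add: sum.cartesian_product)
  also have "\<dots> = (\<Sum>a\<in>?A. pmf \<mu> a)"
    using f by (simp add: coupling_weights_def)
  finally have "(\<integral>\<^sup>+q. ennreal (f q) \<partial>count_space UNIV) = 1"
    using fin outside nonneg
    by (simp add: nn_integral_count_space'[of "?A \<times> ?B"] sum_pmf_eq_1)
  then show pmf_embed: "pmf (embed_pmf f) = f"
    by (intro ext pmf_embed_pmf[OF nonneg])
  have supp: "set_pmf (embed_pmf f) \<subseteq> ?A \<times> ?B"
    using outside by (auto simp: set_pmf_iff pmf_embed)
  have "map_pmf fst (embed_pmf f) = \<mu>" "map_pmf snd (embed_pmf f) = \<nu>"
    using f fin pmf_map_fst[OF supp] pmf_map_snd[OF supp]
    by (auto intro!: pmf_eqI simp: pmf_embed coupling_weights_def)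
  then show "embed_pmf f \<in> couplings \<mu> \<nu>"
    by (simp add: couplings_def)
qed

lemma closed_coupling_weights: "closed (coupling_weights \<mu> \<nu>)"
proof -
  have "coupling_weights \<mu> \<nu> =
      (\<Inter>q. {f. 0 \<le> f q}) \<inter> (\<Inter>q\<in>-(set_pmf \<mu> \<times> set_pmf \<nu>). {f. f q = 0}) \<inter>
      (\<Inter>a. {f. (\<Sum>b\<in>set_pmf \<nu>. f (a, b)) = pmf \<mu> a}) \<inter>
      (\<Inter>b. {f. (\<Sum>a\<in>set_pmf \<mu>. f (a, b)) = pmf \<nu> b})"
    unfolding coupling_weights_def by blast
  also have "closed \<dots>"
    by (intro closed_Int closed_INT ballI closed_Collect_le closed_Collect_eq continuous_on_sum
        continuous_on_const continuous_on_product_coordinates)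
  finally show ?thesis .
qed

lemma coupling_weights_le_1:
  assumes "finite (set_pmf \<nu>)" "f \<in> coupling_weights \<mu> \<nu>"
  shows "f q \<le> 1"
proof (cases "q \<in> set_pmf \<mu> \<times> set_pmf \<nu>")
  case True
  obtain a b where q: "q = (a, b)" "b \<in> set_pmf \<nu>"
    using True by auto
  have "f (a, b) \<le> (\<Sum>b'\<in>set_pmf \<nu>. f (a, b'))"
    using assms q by (intro member_le_sum) (auto simp: coupling_weights_def)
  also have "\<dots> = pmf \<mu> a"
    using assms(2) by (simp add: coupling_weights_def)
  finally show ?thesis
    using q pmf_le_1[of \<mu> a] by simp
next
  case False
  then have "f q = 0"
    using assms(2) unfolding coupling_weights_def by blast
  then show ?thesis by simp
qed

lemma compact_coupling_weights:
  fixes \<mu> :: "'a pmf" and \<nu> :: "'b pmf"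
  assumes "finite (set_pmf \<nu>)"
  shows "compact (coupling_weights \<mu> \<nu>)"
proof -
  let ?box = "PiE UNIV (\<lambda>_. {0..1}) :: ('a \<times> 'b \<Rightarrow> real) set"
  have "compactin (product_topology (\<lambda>_. euclidean) UNIV) ?box"
    by (subst compactin_PiE) auto
  then have "compact ?box"
    by (simp add: euclidean_product_topology)
  moreover have "coupling_weights \<mu> \<nu> \<subseteq> ?box"
  proof
    fix f assume f: "f \<in> coupling_weights \<mu> \<nu>"
    then show "f \<in> ?box"
      using coupling_weights_le_1[OF assms f] by (auto simp: coupling_weights_def)
  qed
  ultimately show ?thesis
    using compact_Int_closed[OF _ closed_coupling_weights] by (metis inf.absorb2)
qed

lemma optimal_coupling_exists:
  assumes fin: "finite (set_pmf \<mu>)" "finite (set_pmf \<nu>)"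
  obtains \<omega> where "\<omega> \<in> couplings \<mu> \<nu>" "\<And>\<omega>'. \<omega>' \<in> couplings \<mu> \<nu> \<Longrightarrow> cost e \<omega> \<le> cost e \<omega>'"
proof -
  let ?W = "coupling_weights \<mu> \<nu>" and ?AB = "set_pmf \<mu> \<times> set_pmf \<nu>"
  define F where "F f = (\<Sum>q\<in>?AB. f q * e q)" for f
  have cost_F: "cost e \<omega> = F (pmf \<omega>)" if "\<omega> \<in> couplings \<mu> \<nu>" for \<omega>
    unfolding cost_def F_def
    by (rule sum.mono_neutral_left) (use fin set_pmf_coupling[OF that] in \<open>auto simp: set_pmf_iff\<close>)
  have "?W \<noteq> {}"
    using pmf_in_coupling_weights[OF fin pair_pmf_coupling] by blast
  moreover have "continuous_on ?W F"
    unfolding F_def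
    by (intro continuous_intros continuous_on_sum continuous_on_product_then_coordinatewise
        continuous_on_id)
  ultimately obtain f where f: "f \<in> ?W" and f_min: "\<And>f'. f' \<in> ?W \<Longrightarrow> F f \<le> F f'"
    using continuous_attains_inf[OF compact_coupling_weights[OF fin(2)]] by blast
  obtain \<omega> where \<omega>: "\<omega> \<in> couplings \<mu> \<nu>" "pmf \<omega> = f"
    using coupling_weights_imp_coupling[OF fin f] .
  show ?thesis
  proof (rule that[OF \<omega>(1)])
    fix \<omega>' assume "\<omega>' \<in> couplings \<mu> \<nu>"
    then have "F f \<le> F (pmf \<omega>')"
      using f_min pmf_in_coupling_weights[OF fin] by blast
    then show "cost e \<omega> \<le> cost e \<omega>'"
      using cost_F \<omega> \<open>\<omega>' \<in> couplings \<mu> \<nu>\<close> by simp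
  qed
qed

lemma Delta_diff_labels: "lab s \<noteq> lab t \<Longrightarrow> Delta \<tau> lab e (s, t) = 1"
  by (simp add: Delta_def)

lemma Delta_same_labels:
  "lab s = lab t \<Longrightarrow> Delta \<tau> lab e (s, t) = Inf (cost e ` couplings (\<tau> s) (\<tau> t))"
  by (simp add: Delta_def cost_def)

lemma Delta_optimal_coupling:
  assumes "lab s = lab t" "finite (set_pmf (\<tau> s))" "finite (set_pmf (\<tau> t))"
  obtains \<omega> where "\<omega> \<in> couplings (\<tau> s) (\<tau> t)" "Delta \<tau> lab e (s, t) = cost e \<omega>"
    "\<And>\<omega>'. \<omega>' \<in> couplings (\<tau> s) (\<tau> t) \<Longrightarrow> Delta \<tau> lab e (s, t) \<le> cost e \<omega>'"
proof -
  obtain \<omega> where \<omega>: "\<omega> \<in> couplings (\<tau> s) (\<tau> t)"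
    and min: "\<And>\<omega>'. \<omega>' \<in> couplings (\<tau> s) (\<tau> t) \<Longrightarrow> cost e \<omega> \<le> cost e \<omega>'"
    using optimal_coupling_exists[OF assms(2,3)] by blast
  have "Inf (cost e ` couplings (\<tau> s) (\<tau> t)) = cost e \<omega>"
    using \<omega> min by (intro cInf_eq_minimum) auto
  then have "Delta \<tau> lab e (s, t) = cost e \<omega>"
    using Delta_same_labels[of lab s t \<tau> e] assms(1) by simp
  then show ?thesis
    using that[OF \<omega>] min by simp
qed

section \<open>Bisimulations and couplings\<close>

lemma prob_bisim_rel_pmf:
  assumes R: "prob_bisim S \<tau> lab R" and st: "(s, t) \<in> R"
    and S_closed: "\<And>x. x \<in> S \<Longrightarrow> set_pmf (\<tau> x) \<subseteq> S"
  shows "rel_pmf (\<lambda>x y. (x, y) \<in> R \<or> x = y) (\<tau> s) (\<tau> t)"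
proof -
  let ?R' = "\<lambda>x y. (x, y) \<in> R \<or> x = y"
  have eq: "equiv S R"
    using R by (simp add: prob_bisim_def)
  then have R_sub: "R \<subseteq> S \<times> S"
    by (auto simp: equiv_def refl_on_def)
  have "equivp ?R'"
  proof (rule equivpI)
    show "reflp ?R'" by (simp add: reflp_def)
    show "symp ?R'" using eq unfolding equiv_def sym_def symp_def by blast
    show "transp ?R'" using eq unfolding equiv_def trans_def transp_def by blast
  qed
  moreover have "measure (\<tau> s) C = measure (\<tau> t) C" if C_class: "C \<in> UNIV // {(x, y). ?R' x y}" for C
  proof -
    obtain x where C: "C = {(x, y). ?R' x y} `` {x}"
      using C_class by (elim quotientE) blast
    show ?thesis
    proof (cases "x \<in> S")
      case True
      then have "C = R `` {x}"
        using C eq by (auto simp: equiv_def refl_on_def)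
      moreover have "R `` {x} \<in> S // R"
        using True by (rule quotientI)
      ultimately show ?thesis
        using R st unfolding prob_bisim_def by fastforce
    next
      case False
      then have "C = {x}" and "x \<notin> set_pmf (\<tau> s)" "x \<notin> set_pmf (\<tau> t)"
        using C R_sub S_closed st by auto
      then show ?thesis
        by (simp add: measure_pmf_single set_pmf_iff)
    qed
  qed
  ultimately show ?thesis
    using rel_pmf_iff_equivp by blast
qed

lemma prob_bisim_coupling:
  assumes R: "prob_bisim S \<tau> lab R" and st: "(s, t) \<in> R"
    and S_closed: "\<And>x. x \<in> S \<Longrightarrow> set_pmf (\<tau> x) \<subseteq> S"
  obtains \<omega> where "\<omega> \<in> couplings (\<tau> s) (\<tau> t)" "set_pmf \<omega> \<subseteq> R"
proof -
  have "rel_pmf (\<lambda>x y. (x, y) \<in> R \<or> x = y) (\<tau> s) (\<tau> t)"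
    using R st S_closed by (rule prob_bisim_rel_pmf)
  then obtain \<omega> where \<omega>: "\<And>x y. (x, y) \<in> set_pmf \<omega> \<Longrightarrow> (x, y) \<in> R \<or> x = y"
    "map_pmf fst \<omega> = \<tau> s" "map_pmf snd \<omega> = \<tau> t"
    by (erule rel_pmf.cases)
  have eq: "equiv S R"
    using R by (simp add: prob_bisim_def)
  have "s \<in> S"
    using eq st by (auto simp: equiv_def refl_on_def)
  have "(x, y) \<in> R" if xy: "(x, y) \<in> set_pmf \<omega>" for x y
  proof -
    have "x \<in> set_pmf (\<tau> s)"
      using xy \<omega>(2) by (metis fst_conv image_eqI set_map_pmf)
    then have "x \<in> S"
      using S_closed \<open>s \<in> S\<close> by blast
    then show ?thesis
      using \<omega>(1)[OF xy] eq by (auto simp: equiv_def refl_on_def)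
  qed
  then have "set_pmf \<omega> \<subseteq> R"
    by auto
  then show ?thesis
    using that \<omega>(2,3) by (simp add: couplings_def)
qed

lemma bisimilar_same_labels:
  assumes "(s, t) \<in> bisimilar S \<tau> lab"
  shows "lab s = lab t"
proof -
  obtain R where "prob_bisim S \<tau> lab R" "(s, t) \<in> R"
    using assms by (auto simp: bisimilar_def)
  then show ?thesis
    by (auto simp: prob_bisim_def)
qed

lemma bisimilar_coupling:
  assumes "(s, t) \<in> bisimilar S \<tau> lab" and S_closed: "\<And>x. x \<in> S \<Longrightarrow> set_pmf (\<tau> x) \<subseteq> S"
  obtains \<omega> where "\<omega> \<in> couplings (\<tau> s) (\<tau> t)" "set_pmf \<omega> \<subseteq> bisimilar S \<tau> lab"
proof -
  obtain R where R: "prob_bisim S \<tau> lab R" "(s, t) \<in> R"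
    using assms(1) by (auto simp: bisimilar_def)
  obtain \<omega> where \<omega>: "\<omega> \<in> couplings (\<tau> s) (\<tau> t)" "set_pmf \<omega> \<subseteq> R"
    using prob_bisim_coupling[OF R S_closed] .
  have "R \<subseteq> bisimilar S \<tau> lab"
    using R(1) by (auto simp: bisimilar_def)
  then show ?thesis
    using that[OF \<omega>(1)] \<omega>(2) by blast
qed

section \<open>The distance as least fixed point of Delta\<close>

lemma dfunI:
  assumes "\<And>p. p \<notin> S \<times> S \<Longrightarrow> e p = 0" "\<And>p. p \<in> S \<times> S \<Longrightarrow> 0 \<le> e p \<and> e p \<le> 1"
  shows "dfun S e"
  using assms by (simp add: dfun_def)

lemma dfun_outside: "dfun S e \<Longrightarrow> p \<notin> S \<times> S \<Longrightarrow> e p = 0"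
  unfolding dfun_def by blast

lemma dfun_bounds: "dfun S e \<Longrightarrow> p \<in> S \<times> S \<Longrightarrow> 0 \<le> e p \<and> e p \<le> 1"
  unfolding dfun_def by blast

lemma bdist_eqI:
  assumes fp: "is_fixpoint S \<tau> lab d"
    and least: "\<And>e p. is_fixpoint S \<tau> lab e \<Longrightarrow> p \<in> S \<times> S \<Longrightarrow> d p \<le> e p"
  shows "bdist S \<tau> lab = d"
  unfolding bdist_def
proof (rule the_equality)
  fix d' assume d': "is_fixpoint S \<tau> lab d' \<and> (\<forall>e. is_fixpoint S \<tau> lab e \<longrightarrow> (\<forall>p\<in>S \<times> S. d' p \<le> e p))"
  show "d' = d"
  proof
    fix p show "d' p = d p"
    proof (cases "p \<in> S \<times> S")
      case True
      then show ?thesis using d' fp least[of d' p] by (meson order.antisym)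
    next
      case False
      then show ?thesis
        using d' fp dfun_outside by (metis is_fixpoint_def)
    qed
  qed
qed (use fp least in blast)

locale labelled_markov_chain =
  fixes S :: "'s set" and L :: "'l set" and \<tau> :: "'s \<Rightarrow> 's pmf" and lab :: "'s \<Rightarrow> 'l"
  assumes lmc: "lmc S L \<tau> lab"
begin

abbreviation d :: "'s \<times> 's \<Rightarrow> real" where
  "d \<equiv> bdist S \<tau> lab"

abbreviation Z :: "('s \<times> 's) set" where
  "Z \<equiv> S2_1 S lab"

lemma transition_support_subset: "s \<in> S \<Longrightarrow> set_pmf (\<tau> s) \<subseteq> S"
  using lmc by (auto simp: lmc_def)

lemma finite_transition_support: "s \<in> S \<Longrightarrow> finite (set_pmf (\<tau> s))"
  using lmc by (auto simp: lmc_def)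

lemma coupling_subset:
  assumes "s \<in> S" "t \<in> S" "\<omega> \<in> couplings (\<tau> s) (\<tau> t)"
  shows "set_pmf \<omega> \<subseteq> S \<times> S"
proof -
  have "set_pmf \<omega> \<subseteq> set_pmf (\<tau> s) \<times> set_pmf (\<tau> t)"
    using assms(3) by (rule set_pmf_coupling)
  also have "\<dots> \<subseteq> S \<times> S"
    using transition_support_subset[OF assms(1)] transition_support_subset[OF assms(2)] by (rule Sigma_mono)
  finally show ?thesis .
qed

lemma finite_coupling:
  assumes "s \<in> S" "t \<in> S" "\<omega> \<in> couplings (\<tau> s) (\<tau> t)"
  shows "finite (set_pmf \<omega>)"
proof (rule finite_subset)
  show "set_pmf \<omega> \<subseteq> set_pmf (\<tau> s) \<times> set_pmf (\<tau> t)"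
    using assms(3) by (rule set_pmf_coupling)
  show "finite (set_pmf (\<tau> s) \<times> set_pmf (\<tau> t))"
    using finite_transition_support assms(1,2) by simp
qed

lemma Delta_le_cost:
  assumes "s \<in> S" "t \<in> S" "lab s = lab t" "\<omega> \<in> couplings (\<tau> s) (\<tau> t)"
  shows "Delta \<tau> lab e (s, t) \<le> cost e \<omega>"
  using Delta_optimal_coupling[OF assms(3) finite_transition_support[OF assms(1)] finite_transition_support[OF assms(2)]]
    assms(4) by metis

lemma Delta_attained:
  assumes "s \<in> S" "t \<in> S" "lab s = lab t"
  obtains \<omega> where "\<omega> \<in> couplings (\<tau> s) (\<tau> t)" "Delta \<tau> lab e (s, t) = cost e \<omega>"
  using Delta_optimal_coupling[OF assms(3) finite_transition_support[OF assms(1)] finite_transition_support[OF assms(2)]]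
  by metis

lemma Delta_mono:
  assumes p: "p \<in> S \<times> S" and le: "\<And>q. q \<in> S \<times> S \<Longrightarrow> e q \<le> e' q"
  shows "Delta \<tau> lab e p \<le> Delta \<tau> lab e' p"
proof -
  obtain s t where st: "p = (s, t)" "s \<in> S" "t \<in> S"
    using p by auto
  show ?thesis
  proof (cases "lab s = lab t")
    case True
    obtain \<omega> where \<omega>: "\<omega> \<in> couplings (\<tau> s) (\<tau> t)" "Delta \<tau> lab e' (s, t) = cost e' \<omega>"
      using Delta_attained[OF st(2,3) True] .
    have "Delta \<tau> lab e (s, t) \<le> cost e \<omega>"
      using Delta_le_cost[OF st(2,3) True \<omega>(1)] .
    also have "\<dots> \<le> cost e' \<omega>"
      using coupling_subset[OF st(2,3) \<omega>(1)] le by (intro cost_mono) blast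
    finally show ?thesis
      using \<omega>(2) st(1) by simp
  qed (use st in \<open>simp add: Delta_diff_labels\<close>)
qed

lemma Delta_bounds:
  assumes p: "p \<in> S \<times> S" and e: "\<And>q. q \<in> S \<times> S \<Longrightarrow> 0 \<le> e q \<and> e q \<le> 1"
  shows "0 \<le> Delta \<tau> lab e p \<and> Delta \<tau> lab e p \<le> 1"
proof -
  obtain s t where st: "p = (s, t)" "s \<in> S" "t \<in> S"
    using p by auto
  show ?thesis
  proof (cases "lab s = lab t")
    case True
    obtain \<omega> where \<omega>: "\<omega> \<in> couplings (\<tau> s) (\<tau> t)" "Delta \<tau> lab e (s, t) = cost e \<omega>"
      using Delta_attained[OF st(2,3) True] .
    then show ?thesis
      using cost_bounds[OF finite_coupling[OF st(2,3) \<omega>(1)]] coupling_subset[OF st(2,3) \<omega>(1)] e st(1)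
      by (metis subsetD)
  qed (use st in \<open>simp add: Delta_diff_labels\<close>)
qed

definition prefixed :: "('s \<times> 's \<Rightarrow> real) set" where
  "prefixed = {e. dfun S e \<and> (\<forall>p\<in>S \<times> S. Delta \<tau> lab e p \<le> e p)}"

text \<open>Functions into the reals do not form a complete lattice, so the least fixed point is built by
  hand as the pointwise infimum of the prefixed points.\<close>

definition inf_prefixed :: "'s \<times> 's \<Rightarrow> real" where
  "inf_prefixed p = (if p \<in> S \<times> S then INF e\<in>prefixed. e p else 0)"

lemma top_prefixed: "(\<lambda>p. if p \<in> S \<times> S then 1 else 0) \<in> prefixed"
proof -
  let ?top = "\<lambda>p. if p \<in> S \<times> S then 1 else 0 :: real"
  have "dfun S ?top"
    by (rule dfunI) simp_all
  moreover have "Delta \<tau> lab ?top p \<le> ?top p" if p: "p \<in> S \<times> S" for p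
    using Delta_bounds[OF p, of ?top] p by simp
  ultimately show ?thesis
    by (simp add: prefixed_def)
qed

lemma prefixed_bounds: "e \<in> prefixed \<Longrightarrow> p \<in> S \<times> S \<Longrightarrow> 0 \<le> e p \<and> e p \<le> 1"
  unfolding prefixed_def using dfun_bounds by blast

lemma Delta_prefixed_le: "e \<in> prefixed \<Longrightarrow> p \<in> S \<times> S \<Longrightarrow> Delta \<tau> lab e p \<le> e p"
  unfolding prefixed_def by blast

lemma inf_prefixed_le:
  assumes "e \<in> prefixed" "p \<in> S \<times> S"
  shows "inf_prefixed p \<le> e p"
proof -
  have "bdd_below ((\<lambda>e. e p) ` prefixed)"
    using prefixed_bounds assms(2) by (intro bdd_belowI[of _ 0]) blast
  then have "(INF e\<in>prefixed. e p) \<le> e p"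
    using assms(1) by (rule cINF_lower)
  then show ?thesis
    using assms(2) by (simp add: inf_prefixed_def)
qed

lemma dfun_inf_prefixed: "dfun S inf_prefixed"
proof (rule dfunI)
  fix p assume p: "p \<in> S \<times> S"
  have "0 \<le> (INF e\<in>prefixed. e p)"
    using top_prefixed prefixed_bounds[OF _ p] by (intro cINF_greatest) blast+
  then show "0 \<le> inf_prefixed p \<and> inf_prefixed p \<le> 1"
    using inf_prefixed_le[OF top_prefixed p] p by (simp add: inf_prefixed_def)
qed (simp add: inf_prefixed_def)

lemma Delta_inf_prefixed_le: "p \<in> S \<times> S \<Longrightarrow> Delta \<tau> lab inf_prefixed p \<le> inf_prefixed p"
proof -
  assume p: "p \<in> S \<times> S"
  have "Delta \<tau> lab inf_prefixed p \<le> e p" if e: "e \<in> prefixed" for e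
  proof -
    have "Delta \<tau> lab inf_prefixed p \<le> Delta \<tau> lab e p"
      using p inf_prefixed_le[OF e] by (rule Delta_mono)
    also have "\<dots> \<le> e p"
      using e p by (rule Delta_prefixed_le)
    finally show ?thesis .
  qed
  then have "Delta \<tau> lab inf_prefixed p \<le> (INF e\<in>prefixed. e p)"
    using top_prefixed by (intro cINF_greatest) blast+
  then show ?thesis
    using p by (simp add: inf_prefixed_def)
qed

lemma Delta_inf_prefixed: "p \<in> S \<times> S \<Longrightarrow> Delta \<tau> lab inf_prefixed p = inf_prefixed p"
proof -
  assume p: "p \<in> S \<times> S"
  define e where "e q = (if q \<in> S \<times> S then Delta \<tau> lab inf_prefixed q else 0)" for q
  have e_le: "e q \<le> inf_prefixed q" if "q \<in> S \<times> S" for q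
    using that Delta_inf_prefixed_le by (simp add: e_def)
  have "dfun S e"
  proof (rule dfunI)
    fix q assume q: "q \<in> S \<times> S"
    then show "0 \<le> e q \<and> e q \<le> 1"
      using Delta_bounds[OF q dfun_bounds[OF dfun_inf_prefixed]] by (simp add: e_def)
  qed (simp add: e_def)
  moreover have "Delta \<tau> lab e q \<le> e q" if q: "q \<in> S \<times> S" for q
  proof -
    have "Delta \<tau> lab e q \<le> Delta \<tau> lab inf_prefixed q"
      using q e_le by (rule Delta_mono)
    then show ?thesis
      using q by (simp add: e_def)
  qed
  ultimately have "e \<in> prefixed"
    by (simp add: prefixed_def)
  then have "inf_prefixed p \<le> Delta \<tau> lab inf_prefixed p"
    using inf_prefixed_le[OF _ p] p by (force simp: e_def)
  then show ?thesis
    using Delta_inf_prefixed_le[OF p] by simp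
qed

lemma bdist_eq_inf_prefixed: "d = inf_prefixed"
proof (rule bdist_eqI)
  show "is_fixpoint S \<tau> lab inf_prefixed"
    using dfun_inf_prefixed Delta_inf_prefixed by (simp add: is_fixpoint_def)
next
  fix e p assume "is_fixpoint S \<tau> lab e" "p \<in> S \<times> S"
  then show "inf_prefixed p \<le> e p"
    by (intro inf_prefixed_le) (auto simp: is_fixpoint_def prefixed_def)
qed

lemma bdist_le_prefixed: "e \<in> prefixed \<Longrightarrow> p \<in> S \<times> S \<Longrightarrow> d p \<le> e p"
  using bdist_eq_inf_prefixed inf_prefixed_le by simp

lemma Delta_bdist: "p \<in> S \<times> S \<Longrightarrow> Delta \<tau> lab d p = d p"
  using bdist_eq_inf_prefixed Delta_inf_prefixed by simp

lemma bdist_nonneg: "0 \<le> d p"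
  using dfun_inf_prefixed dfun_bounds dfun_outside bdist_eq_inf_prefixed by (metis order.refl)

lemma bdist_target:
  assumes "p \<in> Z"
  shows "d p = 1"
proof -
  obtain s t where st: "p = (s, t)" "p \<in> S \<times> S" "lab s \<noteq> lab t"
    using assms by (auto simp: S2_1_def)
  then show ?thesis
    using Delta_bdist[OF st(2)] Delta_diff_labels[of lab s t \<tau> d] st(3) by simp
qed

section \<open>Reachability probabilities\<close>

abbreviation step :: "('s \<times> 's \<Rightarrow> ('s \<times> 's) pmf) \<Rightarrow> 's \<times> 's \<Rightarrow> ('s \<times> 's) pmf" where
  "step T \<equiv> chain_step S \<tau> lab T"

abbreviation reach_within :: "('s \<times> 's \<Rightarrow> ('s \<times> 's) pmf) \<Rightarrow> nat \<Rightarrow> 's \<times> 's \<Rightarrow> real" where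
  "reach_within T n p \<equiv> reach_n S \<tau> lab T Z n p"

abbreviation reach :: "('s \<times> 's \<Rightarrow> ('s \<times> 's) pmf) \<Rightarrow> 's \<times> 's \<Rightarrow> real" where
  "reach T p \<equiv> reach_prob S \<tau> lab T p Z"

lemma target_subset: "Z \<subseteq> S \<times> S"
  by (auto simp: S2_1_def)

lemma S2_q_iff: "p \<in> S2_q S \<tau> lab \<longleftrightarrow> p \<in> S \<times> S \<and> p \<notin> Z \<and> p \<notin> bisimilar S \<tau> lab"
  by (auto simp: S2_q_def S2_0_def)

lemma step_support:
  assumes "policy S \<tau> lab T"
  shows "finite (set_pmf (step T p))" "p \<in> S \<times> S \<Longrightarrow> set_pmf (step T p) \<subseteq> S \<times> S"
proof -
  have "finite (set_pmf (step T p)) \<and> (p \<in> S \<times> S \<longrightarrow> set_pmf (step T p) \<subseteq> S \<times> S)"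
  proof (cases "p \<in> S2_q S \<tau> lab")
    case True
    then obtain s t where st: "p = (s, t)" "s \<in> S" "t \<in> S"
      by (auto simp: S2_q_iff)
    have "T p \<in> couplings (\<tau> s) (\<tau> t)"
      using assms True st(1) by (auto simp: policy_def)
    then show ?thesis
      using finite_coupling[OF st(2,3)] coupling_subset[OF st(2,3)] True
      by (simp add: chain_step_def)
  qed (simp add: chain_step_def)
  then show "finite (set_pmf (step T p))" "p \<in> S \<times> S \<Longrightarrow> set_pmf (step T p) \<subseteq> S \<times> S"
    by blast+
qed

lemma reach_within_Suc:
  "p \<notin> Z \<Longrightarrow> policy S \<tau> lab T \<Longrightarrow> reach_within T (Suc n) p = cost (reach_within T n) (step T p)"
  using step_support(1) by (simp add: expectation_eq_cost)

lemma reach_within_absorbing: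
  "p \<notin> Z \<Longrightarrow> p \<notin> S2_q S \<tau> lab \<Longrightarrow> reach_within T n p = 0"
  by (induction n) (simp_all add: chain_step_def)

lemma reach_within_bounds: "policy S \<tau> lab T \<Longrightarrow> 0 \<le> reach_within T n p \<and> reach_within T n p \<le> 1"
proof (induction n arbitrary: p)
  case (Suc n)
  show ?case
  proof (cases "p \<in> Z")
    case False
    have "0 \<le> cost (reach_within T n) (step T p) \<and> cost (reach_within T n) (step T p) \<le> 1"
      using Suc.IH[OF Suc.prems] by (intro cost_bounds[OF step_support(1)[OF Suc.prems]])
    then show ?thesis
      using reach_within_Suc[OF False Suc.prems] by simp
  qed simp
qed simp

lemma reach_within_mono: "policy S \<tau> lab T \<Longrightarrow> reach_within T n p \<le> reach_within T (Suc n) p"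
proof (induction n arbitrary: p)
  case 0
  then show ?case
    using reach_within_bounds[OF 0, of "Suc 0" p] by simp
next
  case (Suc n)
  show ?case
  proof (cases "p \<in> Z")
    case False
    have "cost (reach_within T n) (step T p) \<le> cost (reach_within T (Suc n)) (step T p)"
      using Suc.IH[OF Suc.prems] by (rule cost_mono)
    then show ?thesis
      using reach_within_Suc[OF False Suc.prems] by simp
  qed simp
qed

lemma bdd_above_reach_within: "policy S \<tau> lab T \<Longrightarrow> bdd_above (range (\<lambda>n. reach_within T n p))"
  using reach_within_bounds by (intro bdd_aboveI[of _ 1]) blast

lemma reach_within_tendsto: "policy S \<tau> lab T \<Longrightarrow> (\<lambda>n. reach_within T n p) \<longlonglongrightarrow> reach T p"
  unfolding reach_prob_def
  by (intro LIMSEQ_incseq_SUP bdd_above_reach_within incseq_SucI reach_within_mono)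

lemma reach_within_le_reach: "policy S \<tau> lab T \<Longrightarrow> reach_within T n p \<le> reach T p"
  unfolding reach_prob_def using bdd_above_reach_within by (intro cSUP_upper) auto

lemma reach_bounds:
  assumes "policy S \<tau> lab T"
  shows "0 \<le> reach T p \<and> reach T p \<le> 1"
proof
  show "0 \<le> reach T p"
    using reach_within_bounds[OF assms, of 0 p] reach_within_le_reach[OF assms, of 0 p] by linarith
  show "reach T p \<le> 1"
    unfolding reach_prob_def using reach_within_bounds[OF assms] by (intro cSUP_least) auto
qed

lemma reach_target: "p \<in> Z \<Longrightarrow> reach T p = 1"
proof -
  assume "p \<in> Z"
  then have "reach_within T n p = 1" for n
    by (cases n) auto
  then show ?thesis
    by (simp add: reach_prob_def)
qed

lemma reach_absorbing: "p \<notin> Z \<Longrightarrow> p \<notin> S2_q S \<tau> lab \<Longrightarrow> reach T p = 0"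
  by (simp add: reach_prob_def reach_within_absorbing)

lemma reach_bisimilar:
  assumes "q \<in> bisimilar S \<tau> lab"
  shows "reach T q = 0"
proof (cases q)
  case (Pair s t)
  have "lab s = lab t"
    using assms unfolding Pair by (rule bisimilar_same_labels)
  then have "q \<notin> Z"
    using Pair by (simp add: S2_1_def)
  moreover have "q \<notin> S2_q S \<tau> lab"
    using assms by (simp add: S2_q_iff)
  ultimately show ?thesis
    by (rule reach_absorbing)
qed

lemma reach_bellman:
  assumes "p \<notin> Z" "policy S \<tau> lab T"
  shows "reach T p = cost (reach T) (step T p)"
proof (rule LIMSEQ_unique)
  show "(\<lambda>n. reach_within T (Suc n) p) \<longlonglongrightarrow> reach T p"
    using reach_within_tendsto[OF assms(2)] by (rule LIMSEQ_Suc)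
  show "(\<lambda>n. reach_within T (Suc n) p) \<longlonglongrightarrow> cost (reach T) (step T p)"
    unfolding reach_within_Suc[OF assms]
    by (intro tendsto_cost reach_within_tendsto[OF assms(2)])
qed

lemma reach_prefixed:
  assumes T: "policy S \<tau> lab T"
  shows "reach T \<in> prefixed"
proof -
  have "dfun S (reach T)"
  proof (rule dfunI)
    fix p assume "p \<notin> S \<times> S"
    then show "reach T p = 0"
      using target_subset by (intro reach_absorbing) (auto simp: S2_q_iff)
  qed (rule reach_bounds[OF T])
  moreover have "Delta \<tau> lab (reach T) p \<le> reach T p" if p: "p \<in> S \<times> S" for p
  proof -
    obtain s t where st: "p = (s, t)" "s \<in> S" "t \<in> S"
      using p by auto
    consider "p \<in> Z" | "p \<in> S2_q S \<tau> lab" | "p \<in> bisimilar S \<tau> lab"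
      using p S2_q_iff by blast
    then show ?thesis
    proof cases
      case 1
      then have "lab s \<noteq> lab t"
        using st(1) unfolding S2_1_def by blast
      then have "Delta \<tau> lab (reach T) p = 1"
        unfolding st(1) by (rule Delta_diff_labels)
      then show ?thesis
        using reach_target[OF 1] by simp
    next
      case 2
      then have "p \<notin> Z"
        by (simp add: S2_q_iff)
      then have lab: "lab s = lab t"
        using st unfolding S2_1_def by blast
      have c: "T p \<in> couplings (\<tau> s) (\<tau> t)"
        using T 2 st(1) by (auto simp: policy_def)
      have "Delta \<tau> lab (reach T) p \<le> cost (reach T) (T p)"
        using Delta_le_cost[OF st(2,3) lab c] st(1) by simp
      also have "\<dots> = reach T p"
        using reach_bellman[OF \<open>p \<notin> Z\<close> T] 2 by (simp add: chain_step_def)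
      finally show ?thesis .
    next
      case 3
      then have lab: "lab s = lab t"
        unfolding st(1) by (rule bisimilar_same_labels)
      obtain \<omega> where \<omega>: "\<omega> \<in> couplings (\<tau> s) (\<tau> t)" "set_pmf \<omega> \<subseteq> bisimilar S \<tau> lab"
        using bisimilar_coupling[OF 3[unfolded st(1)] transition_support_subset] .
      have "Delta \<tau> lab (reach T) p \<le> cost (reach T) \<omega>"
        unfolding st(1) by (rule Delta_le_cost[OF st(2,3) lab \<omega>(1)])
      also have "\<dots> = 0"
        using \<omega>(2) reach_bisimilar by (intro cost_const[OF finite_coupling[OF st(2,3) \<omega>(1)]]) blast
      also have "\<dots> \<le> reach T p"
        using reach_bounds[OF T] by blast
      finally show ?thesis .
    qed
  qed
  ultimately show ?thesis
    by (simp add: prefixed_def)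
qed

lemma bdist_le_reach: "policy S \<tau> lab T \<Longrightarrow> p \<in> S \<times> S \<Longrightarrow> d p \<le> reach T p"
  using bdist_le_prefixed reach_prefixed by blast

text \<open>The choice is only meaningful on \<open>S2_q\<close>; elsewhere the chain is absorbing and ignores it.\<close>

definition opt_policy :: "'s \<times> 's \<Rightarrow> ('s \<times> 's) pmf" where
  "opt_policy p = (SOME \<omega>. \<omega> \<in> couplings (\<tau> (fst p)) (\<tau> (snd p)) \<and> Delta \<tau> lab d p = cost d \<omega>)"

lemma opt_policy_optimal:
  assumes "p \<in> S2_q S \<tau> lab"
  shows "opt_policy p \<in> couplings (\<tau> (fst p)) (\<tau> (snd p))" "Delta \<tau> lab d p = cost d (opt_policy p)"
proof -
  obtain s t where st: "p = (s, t)" "s \<in> S" "t \<in> S" "lab s = lab t"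
    using assms by (auto simp: S2_q_iff S2_1_def)
  then have "\<exists>\<omega>. \<omega> \<in> couplings (\<tau> (fst p)) (\<tau> (snd p)) \<and> Delta \<tau> lab d p = cost d \<omega>"
    using Delta_attained[OF st(2-4)] by auto
  from someI_ex[OF this]
  show "opt_policy p \<in> couplings (\<tau> (fst p)) (\<tau> (snd p))" "Delta \<tau> lab d p = cost d (opt_policy p)"
    unfolding opt_policy_def by blast+
qed

lemma policy_opt_policy: "policy S \<tau> lab opt_policy"
  using opt_policy_optimal(1) by (fastforce simp: policy_def)

lemma reach_within_opt_policy_le: "p \<in> S \<times> S \<Longrightarrow> reach_within opt_policy n p \<le> d p"
proof (induction n arbitrary: p)
  case 0
  then show ?case
    using bdist_target bdist_nonneg by simp
next
  case (Suc n)
  consider "p \<in> Z" | "p \<in> S2_q S \<tau> lab" | "p \<notin> Z" "p \<notin> S2_q S \<tau> lab"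
    by blast
  then show ?case
  proof cases
    case 1
    then show ?thesis
      using bdist_target by simp
  next
    case 2
    then obtain s t where st: "p = (s, t)" "s \<in> S" "t \<in> S" "p \<notin> Z"
      by (auto simp: S2_q_iff)
    have "reach_within opt_policy (Suc n) p = cost (reach_within opt_policy n) (opt_policy p)"
      using reach_within_Suc[OF st(4) policy_opt_policy] 2 by (simp add: chain_step_def)
    also have "\<dots> \<le> cost d (opt_policy p)"
    proof (rule cost_mono)
      have "set_pmf (opt_policy p) \<subseteq> S \<times> S"
        using coupling_subset[OF st(2,3)] opt_policy_optimal(1)[OF 2] st(1) by simp
      then show "reach_within opt_policy n q \<le> d q" if "q \<in> set_pmf (opt_policy p)" for q
        using Suc.IH that by blast
    qed
    also have "\<dots> = d p"
      using opt_policy_optimal(2)[OF 2] Delta_bdist[OF Suc.prems] by simp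
    finally show ?thesis .
  next
    case 3
    then have "reach_within opt_policy (Suc n) p = 0"
      by (rule reach_within_absorbing)
    then show ?thesis
      using bdist_nonneg by simp
  qed
qed

lemma reach_opt_policy_le: "p \<in> S \<times> S \<Longrightarrow> reach opt_policy p \<le> d p"
  unfolding reach_prob_def using reach_within_opt_policy_le by (intro cSUP_least) auto

end

theorem mainTheorem9:
  fixes S :: "'s set" and L :: "'l set" and \<tau> :: "'s \<Rightarrow> 's pmf" and lab :: "'s \<Rightarrow> 'l"
  assumes "lmc S L \<tau> lab"
  shows "\<exists>T. policy S \<tau> lab T \<and>
    (\<forall>s\<in>S. \<forall>t\<in>S. \<forall>T'. policy S \<tau> lab T' \<longrightarrow>
       bdist S \<tau> lab (s,t) = reach_prob S \<tau> lab T (s,t) (S2_1 S lab) \<and>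
       reach_prob S \<tau> lab T (s,t) (S2_1 S lab) \<le> reach_prob S \<tau> lab T' (s,t) (S2_1 S lab))"
proof -
  interpret labelled_markov_chain S L \<tau> lab
    using assms by unfold_locales
  have "bdist S \<tau> lab p = reach opt_policy p \<and> reach opt_policy p \<le> reach T' p"
    if "p \<in> S \<times> S" "policy S \<tau> lab T'" for p T'
    using that reach_opt_policy_le bdist_le_reach[OF policy_opt_policy] bdist_le_reach
    by (meson order.antisym order.trans)
  then show ?thesis
    using policy_opt_policy by blast
qed

end
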